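(* Let $G$ be a graph, $Q\subseteq V(G)$ and $r:Q\to\{2,3\}$. If $G$ is a minimal $(Q,r)$-vertex-connected graph, then $G$ is biconnected.
   Context: Two vertices are $k$-vertex-connected if there are $k$ internally vertex-disjoint paths between them. $G$ is $(Q,r)$-vertex-connected if every pair $x,y\in Q$ is $\min\{r(x),r(y)\}$-vertex-connected in $G$; it is minimal if deleting any edge or vertex of $G$ violates this requirement. Biconnected means connected with no cut-vertex. *)

theory Defs
  imports Main
begin

definition graph :: "'a set \<Rightarrow> 'a set set \<Rightarrow> bool" where
  "graph V E \<longleftrightarrow> finite V \<and> (\<forall>e\<in>E. \<exists>u v. e = {u, v} \<and> u \<noteq> v \<and> u \<in> V \<and> v \<in> V)"

definition del_vertex_edges :: "'a \<Rightarrow> 'a set set \<Rightarrow> 'a set set" where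
  "del_vertex_edges v E = {e \<in> E. v \<notin> e}"

definition is_path :: "'a set \<Rightarrow> 'a set set \<Rightarrow> 'a list \<Rightarrow> 'a \<Rightarrow> 'a \<Rightarrow> bool" where
  "is_path V E p x y \<longleftrightarrow> p \<noteq> [] \<and> hd p = x \<and> last p = y \<and> distinct p \<and> set p \<subseteq> V \<and>
     (\<forall>i. Suc i < length p \<longrightarrow> {p ! i, p ! Suc i} \<in> E)"

definition interior :: "'a list \<Rightarrow> 'a set" where
  "interior p = set (butlast (tl p))"

definition k_vertex_connected :: "'a set \<Rightarrow> 'a set set \<Rightarrow> nat \<Rightarrow> 'a \<Rightarrow> 'a \<Rightarrow> bool" where
  "k_vertex_connected V E k x y \<longleftrightarrow>
     (\<exists>P. finite P \<and> card P = k \<and> (\<forall>p\<in>P. is_path V E p x y) \<and>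
          (\<forall>p\<in>P. \<forall>q\<in>P. p \<noteq> q \<longrightarrow> interior p \<inter> interior q = {}))"

definition QR_vertex_connected :: "'a set \<Rightarrow> 'a set set \<Rightarrow> 'a set \<Rightarrow> ('a \<Rightarrow> nat) \<Rightarrow> bool" where
  "QR_vertex_connected V E Q r \<longleftrightarrow> Q \<subseteq> V \<and>
     (\<forall>x\<in>Q. \<forall>y\<in>Q. x \<noteq> y \<longrightarrow> k_vertex_connected V E (min (r x) (r y)) x y)"

definition minimal_QR_vertex_connected :: "'a set \<Rightarrow> 'a set set \<Rightarrow> 'a set \<Rightarrow> ('a \<Rightarrow> nat) \<Rightarrow> bool" where
  "minimal_QR_vertex_connected V E Q r \<longleftrightarrow> QR_vertex_connected V E Q r \<and>
     (\<forall>e\<in>E. \<not> QR_vertex_connected V (E - {e}) Q r) \<and>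
     (\<forall>v\<in>V. \<not> QR_vertex_connected (V - {v}) (del_vertex_edges v E) Q r)"

definition connected_graph :: "'a set \<Rightarrow> 'a set set \<Rightarrow> bool" where
  "connected_graph V E \<longleftrightarrow> (\<forall>x\<in>V. \<forall>y\<in>V. \<exists>p. is_path V E p x y)"

definition biconnected :: "'a set \<Rightarrow> 'a set set \<Rightarrow> bool" where
  "biconnected V E \<longleftrightarrow> connected_graph V E \<and>
     (\<forall>v\<in>V. connected_graph (V - {v}) (del_vertex_edges v E))"

end

theory Submission
  imports Defs
begin

text \<open>If G is disconnected, let D be the component of a vertex and C the rest of G; if w is a
  cut vertex, let D be a component of G - w and C the rest of G - w. Every edge leaving D or C
  ends in w. A path with both ends outside D could enter D only through w and would have to
  leave it through w again, so it avoids D; deleting a vertex of D therefore preserves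
  (Q,r)-connectivity unless D contains a terminal. By minimality D and C contain terminals x
  and y, and every x-y path passes through a vertex outside D adjacent to D. That is impossible
  in the disconnected case, and for a cut vertex w it puts w inside both of two internally
  disjoint x-y paths, which exist because r \<ge> 2.\<close>

definition boundary :: "'a set set \<Rightarrow> 'a set \<Rightarrow> 'a set" where
  "boundary E D = {z. z \<notin> D \<and> (\<exists>u\<in>D. {u, z} \<in> E)}"

definition reach :: "'a set \<Rightarrow> 'a set set \<Rightarrow> 'a \<Rightarrow> 'a set" where
  "reach V E a = {z. \<exists>p. is_path V E p a z}"

lemma nat_transition_between:
  fixes P :: "nat \<Rightarrow> bool"
  shows "\<not> P m \<Longrightarrow> P n \<Longrightarrow> m < n \<Longrightarrow> \<exists>k. m \<le> k \<and> k < n \<and> \<not> P k \<and> P (Suc k)"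
proof (induction n)
  case 0
  then show ?case by simp
next
  case (Suc n)
  show ?case
  proof (cases "P n")
    case True
    then have "m < n" using Suc.prems by (metis less_SucE)
    then show ?thesis using Suc True by (meson less_SucI)
  next
    case False
    then show ?thesis using Suc.prems by (intro exI[of _ n]) auto
  qed
qed

lemma boundaryI: "u \<in> D \<Longrightarrow> z \<notin> D \<Longrightarrow> {u, z} \<in> E \<Longrightarrow> z \<in> boundary E D"
  unfolding boundary_def by blast

lemma edge_in_graph:
  assumes "graph V E" "{u, z} \<in> E"
  shows "z \<in> V"
proof -
  obtain a b where "{u, z} = {a, b}" "a \<in> V" "b \<in> V"
    using assms unfolding graph_def by blast
  then show ?thesis by (auto simp: doubleton_eq_iff)
qed

lemma boundary_complement:
  assumes "graph V E" "boundary E D \<subseteq> S"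
  shows "boundary E (V - S - D) \<subseteq> S"
proof
  fix z assume "z \<in> boundary E (V - S - D)"
  then obtain u where u: "u \<in> V - S - D" "z \<notin> V - S - D" "{u, z} \<in> E"
    unfolding boundary_def by blast
  have "z \<notin> D"
  proof
    assume "z \<in> D"
    moreover have "{z, u} \<in> E" using u(3) by (simp only: insert_commute)
    ultimately have "u \<in> boundary E D" using u(1) by (intro boundaryI) auto
    then show False using assms(2) u(1) by blast
  qed
  then show "z \<in> S" using u(2) edge_in_graph[OF assms(1) u(3)] by blast
qed

lemma is_path_take:
  assumes "is_path V E p x y" "i < length p"
  shows "is_path V E (take (Suc i) p) x (p ! i)"
proof -
  have "hd (take (Suc i) p) = x" using assms(1) unfolding is_path_def by (simp add: hd_take)
  moreover have "last (take (Suc i) p) = p ! i" using assms(2) by (simp add: take_Suc_conv_app_nth)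
  moreover have "set (take (Suc i) p) \<subseteq> V"
    using assms set_take_subset[of "Suc i" p] unfolding is_path_def by blast
  ultimately show ?thesis using assms unfolding is_path_def by auto
qed

lemma is_path_snoc:
  assumes "is_path V E p x y" "z \<notin> set p" "z \<in> V" "{y, z} \<in> E"
  shows "is_path V E (p @ [z]) x z"
proof -
  have "{(p @ [z]) ! k, (p @ [z]) ! Suc k} \<in> E" if k: "Suc k < length (p @ [z])" for k
  proof (cases "Suc k < length p")
    case True
    then show ?thesis using assms(1) unfolding is_path_def by (simp add: nth_append)
  next
    case False
    then have "k = length p - 1" using k by simp
    then have "(p @ [z]) ! k = y" "(p @ [z]) ! Suc k = z"
      using assms(1) unfolding is_path_def by (auto simp: nth_append last_conv_nth)
    then show ?thesis using assms(4) by simp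
  qed
  then show ?thesis using assms unfolding is_path_def by auto
qed

lemma is_path_del_vertex:
  "is_path V E p x y \<Longrightarrow> v \<notin> set p \<Longrightarrow> is_path (V - {v}) (del_vertex_edges v E) p x y"
  unfolding is_path_def del_vertex_edges_def by (auto simp: nth_mem)

lemma mem_interior:
  assumes "is_path V E p x y" "w \<in> set p" "w \<noteq> x" "w \<noteq> y"
  shows "w \<in> interior p"
proof -
  have "p = x # tl p" using assms(1) unfolding is_path_def by (metis list.collapse)
  then have w: "w \<in> set (tl p)" using assms(2,3) by (metis set_ConsD)
  then have "tl p = butlast (tl p) @ [y]"
    using assms(1) unfolding is_path_def by (metis append_butlast_last_id empty_iff empty_set last_tl)
  then show ?thesis using w assms(4) unfolding interior_def by (metis rotate1.simps(2) set_ConsD set_rotate1)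
qed

lemma path_crosses_boundary:
  assumes p: "is_path V E p x y" and "x \<in> D" "y \<notin> D"
  shows "\<exists>z\<in>set p. z \<in> boundary E D"
proof -
  have h: "p ! 0 = x" and l: "p ! (length p - 1) = y"
    using p unfolding is_path_def by (auto simp: hd_conv_nth last_conv_nth)
  then have "0 < length p - 1" using assms(2,3) by (metis gr0I)
  then obtain k where k: "k < length p - 1" "p ! k \<in> D" "p ! Suc k \<notin> D"
    using nat_transition_between[of "\<lambda>k. p ! k \<notin> D" 0 "length p - 1"] h l assms(2,3) by auto
  then have "Suc k < length p" by simp
  then have "{p ! k, p ! Suc k} \<in> E" using p unfolding is_path_def by blast
  then show ?thesis using boundaryI k \<open>Suc k < length p\<close> by (metis nth_mem)
qed

text \<open>Entering D and leaving it again would both go through w, which a path visits only once.\<close>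

lemma path_avoids_set:
  assumes p: "is_path V E p x y" and "x \<notin> D" "y \<notin> D" and bd: "boundary E D \<subseteq> {w}"
  shows "set p \<inter> D = {}"
proof (rule ccontr)
  assume "set p \<inter> D \<noteq> {}"
  then obtain i where i: "i < length p" "p ! i \<in> D" by (metis disjoint_iff in_set_conv_nth)
  have h: "p ! 0 = x" and l: "p ! (length p - 1) = y" and dp: "distinct p"
    and edge: "\<And>k. Suc k < length p \<Longrightarrow> {p ! k, p ! Suc k} \<in> E"
    using p unfolding is_path_def by (auto simp: hd_conv_nth last_conv_nth)
  have "0 < i" using h i assms(2) by (metis gr0I)
  then obtain j where j: "j < i" "p ! j \<notin> D" "p ! Suc j \<in> D"
    using nat_transition_between[of "\<lambda>k. p ! k \<in> D" 0 i] h i assms(2) by auto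
  then have "p ! j \<in> boundary E D"
    using boundaryI[of "p ! Suc j" D "p ! j" E] edge[of j] i by (simp add: insert_commute)
  then have pj: "p ! j = w" using bd by blast
  have "i \<noteq> length p - 1" using l i(2) assms(3) by auto
  then have "i < length p - 1" using i(1) by linarith
  then obtain k where k: "i \<le> k" "k < length p - 1" "p ! k \<in> D" "p ! Suc k \<notin> D"
    using nat_transition_between[of "\<lambda>k. p ! k \<notin> D" i "length p - 1"] l i assms(3) by auto
  then have "p ! Suc k \<in> boundary E D" using boundaryI[of "p ! k" D "p ! Suc k" E] edge[of k] by simp
  then have "p ! Suc k = w" using bd by blast
  moreover have "p ! j \<noteq> p ! Suc k" using dp j k by (simp add: nth_eq_iff_index_eq)
  ultimately show False using pj by simp
qed

lemma reach_subset: "reach V E a \<subseteq> V"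
  unfolding reach_def is_path_def by (auto simp: last_in_set)

lemma reach_refl: "a \<in> V \<Longrightarrow> a \<in> reach V E a"
  unfolding reach_def by (intro CollectI exI[of _ "[a]"]) (simp add: is_path_def)

lemma reach_edge:
  assumes "u \<in> reach V E a" "{u, z} \<in> E" "z \<in> V"
  shows "z \<in> reach V E a"
proof -
  obtain p where p: "is_path V E p a u" using assms(1) unfolding reach_def by blast
  show ?thesis
  proof (cases "z \<in> set p")
    case True
    then obtain i where "i < length p" "p ! i = z" by (metis in_set_conv_nth)
    then show ?thesis using is_path_take[OF p] unfolding reach_def by blast
  next
    case False
    then show ?thesis using is_path_snoc[OF p False assms(3,2)] unfolding reach_def by blast
  qed
qed

lemma boundary_reach:
  assumes "graph V E"
  shows "boundary E (reach V E a) = {}"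
proof -
  have "z \<in> reach V E a" if "u \<in> reach V E a" "{u, z} \<in> E" for u z
    using reach_edge[OF that edge_in_graph[OF assms that(2)]] .
  then show ?thesis unfolding boundary_def by blast
qed

lemma boundary_reach_del_vertex:
  assumes "graph V E"
  shows "boundary E (reach (V - {w}) (del_vertex_edges w E) a) \<subseteq> {w}"
proof
  fix z assume "z \<in> boundary E (reach (V - {w}) (del_vertex_edges w E) a)"
  then obtain u where u: "u \<in> reach (V - {w}) (del_vertex_edges w E) a"
    "z \<notin> reach (V - {w}) (del_vertex_edges w E) a" "{u, z} \<in> E"
    unfolding boundary_def by blast
  have "u \<noteq> w" using u(1) reach_subset[of "V - {w}"] by blast
  show "z \<in> {w}"
  proof (rule ccontr)
    assume "z \<notin> {w}"
    then have "{u, z} \<in> del_vertex_edges w E" "z \<in> V - {w}"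
      using u(3) \<open>u \<noteq> w\<close> edge_in_graph[OF assms u(3)] unfolding del_vertex_edges_def by simp_all
    then show False using reach_edge[OF u(1)] u(2) by simp
  qed
qed

lemma QR_vertex_connectedD:
  "QR_vertex_connected V E Q r \<Longrightarrow> x \<in> Q \<Longrightarrow> y \<in> Q \<Longrightarrow> x \<noteq> y
    \<Longrightarrow> k_vertex_connected V E (min (r x) (r y)) x y"
  unfolding QR_vertex_connected_def by blast

lemma k_vertex_connected_path:
  assumes "k_vertex_connected V E k x y" "1 \<le> k"
  shows "\<exists>p. is_path V E p x y"
proof -
  obtain P where P: "card P = k" "\<forall>p\<in>P. is_path V E p x y"
    using assms(1) unfolding k_vertex_connected_def by blast
  then have "P \<noteq> {}" using assms(2) by auto
  then show ?thesis using P(2) by blast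
qed

lemma k_vertex_connected_two_paths:
  assumes "k_vertex_connected V E k x y" "2 \<le> k"
  shows "\<exists>p q. p \<noteq> q \<and> is_path V E p x y \<and> is_path V E q x y \<and> interior p \<inter> interior q = {}"
proof -
  obtain P where P: "finite P" "card P = k" "\<forall>p\<in>P. is_path V E p x y"
      "\<forall>p\<in>P. \<forall>q\<in>P. p \<noteq> q \<longrightarrow> interior p \<inter> interior q = {}"
    using assms(1) unfolding k_vertex_connected_def by blast
  have "\<not> card P \<le> Suc 0" using P(2) assms(2) by simp
  then obtain p q where "p \<in> P" "q \<in> P" "p \<noteq> q"
    unfolding card_le_Suc0_iff_eq[OF P(1)] by blast
  then show ?thesis using P(3,4) by blast
qed

lemma QR_vertex_connected_del_vertex:
  assumes qr: "QR_vertex_connected V E Q r" and bd: "boundary E D \<subseteq> {w}"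
    and "Q \<inter> D = {}" "v \<in> D"
  shows "QR_vertex_connected (V - {v}) (del_vertex_edges v E) Q r"
  unfolding QR_vertex_connected_def
proof (intro conjI ballI impI)
  show "Q \<subseteq> V - {v}" using qr assms(3,4) unfolding QR_vertex_connected_def by blast
next
  fix x y assume xy: "x \<in> Q" "y \<in> Q" "x \<noteq> y"
  then obtain P where P: "finite P" "card P = min (r x) (r y)" "\<forall>p\<in>P. is_path V E p x y"
      "\<forall>p\<in>P. \<forall>q\<in>P. p \<noteq> q \<longrightarrow> interior p \<inter> interior q = {}"
    using qr unfolding QR_vertex_connected_def k_vertex_connected_def by meson
  have "x \<notin> D" "y \<notin> D" using xy assms(3) by auto
  have "is_path (V - {v}) (del_vertex_edges v E) p x y" if "p \<in> P" for p
  proof -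
    have p: "is_path V E p x y" using P(3) that by blast
    then have "v \<notin> set p" using path_avoids_set[OF p \<open>x \<notin> D\<close> \<open>y \<notin> D\<close> bd] assms(4) by blast
    then show ?thesis using is_path_del_vertex[OF p] by blast
  qed
  then show "k_vertex_connected (V - {v}) (del_vertex_edges v E) (min (r x) (r y)) x y"
    unfolding k_vertex_connected_def using P(1,2,4) by blast
qed

lemma minimal_QR_vertex_connected_meets:
  assumes "minimal_QR_vertex_connected V E Q r" "boundary E D \<subseteq> {w}" "v \<in> D" "v \<in> V"
  shows "Q \<inter> D \<noteq> {}"
proof
  assume "Q \<inter> D = {}"
  then have "QR_vertex_connected (V - {v}) (del_vertex_edges v E) Q r"
    using assms(1) QR_vertex_connected_del_vertex[OF _ assms(2) _ assms(3)]
    unfolding minimal_QR_vertex_connected_def by blast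
  then show False using assms(1,4) unfolding minimal_QR_vertex_connected_def by blast
qed

lemma minimal_QR_vertex_connected_connected:
  assumes G: "graph V E" and r: "\<forall>q\<in>Q. 1 \<le> r q" and min: "minimal_QR_vertex_connected V E Q r"
  shows "connected_graph V E"
  unfolding connected_graph_def
proof (intro ballI, rule ccontr)
  fix a b assume ab: "a \<in> V" "b \<in> V" "\<nexists>p. is_path V E p a b"
  define D where "D = reach V E a"
  have bdD: "boundary E D = {}" unfolding D_def using boundary_reach[OF G] .
  have bdC: "boundary E (V - D) = {}" using boundary_complement[OF G, of D "{}"] bdD by simp
  have "a \<in> D" unfolding D_def using reach_refl[OF ab(1)] .
  moreover have "b \<in> V - D" using ab(2,3) unfolding D_def reach_def by blast
  moreover have "boundary E D \<subseteq> {a}" "boundary E (V - D) \<subseteq> {a}" using bdD bdC by simp_all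
  ultimately have "Q \<inter> D \<noteq> {}" "Q \<inter> (V - D) \<noteq> {}"
    using minimal_QR_vertex_connected_meets[OF min] ab(1,2) by blast+
  then obtain x y where x: "x \<in> Q" "x \<in> D" and y: "y \<in> Q" "y \<notin> D" by blast
  have qr: "QR_vertex_connected V E Q r" using min unfolding minimal_QR_vertex_connected_def by blast
  have "x \<noteq> y" using x(2) y(2) by blast
  have "1 \<le> min (r x) (r y)" using r x(1) y(1) by simp
  then obtain p where p: "is_path V E p x y"
    using k_vertex_connected_path[OF QR_vertex_connectedD[OF qr x(1) y(1) \<open>x \<noteq> y\<close>]] by blast
  show False using path_crosses_boundary[OF p x(2) y(2)] bdD by simp
qed

lemma minimal_QR_vertex_connected_del_vertex_connected:
  assumes G: "graph V E" and r: "\<forall>q\<in>Q. 2 \<le> r q" and min: "minimal_QR_vertex_connected V E Q r"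
  shows "connected_graph (V - {w}) (del_vertex_edges w E)"
  unfolding connected_graph_def
proof (intro ballI, rule ccontr)
  fix a b assume ab: "a \<in> V - {w}" "b \<in> V - {w}"
    "\<nexists>p. is_path (V - {w}) (del_vertex_edges w E) p a b"
  define D where "D = reach (V - {w}) (del_vertex_edges w E) a"
  have bdD: "boundary E D \<subseteq> {w}" unfolding D_def using boundary_reach_del_vertex[OF G] .
  have bdC: "boundary E (V - {w} - D) \<subseteq> {w}" using boundary_complement[OF G bdD] .
  have DV: "D \<subseteq> V - {w}" unfolding D_def using reach_subset .
  have "a \<in> D" unfolding D_def using reach_refl[OF ab(1)] .
  moreover have "b \<in> V - {w} - D" using ab(2,3) unfolding D_def reach_def by blast
  ultimately have "Q \<inter> D \<noteq> {}" "Q \<inter> (V - {w} - D) \<noteq> {}"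
    using minimal_QR_vertex_connected_meets[OF min bdD] minimal_QR_vertex_connected_meets[OF min bdC]
      ab(1,2) by blast+
  then obtain x y where x: "x \<in> Q" "x \<in> D" and y: "y \<in> Q" "y \<notin> D" "y \<noteq> w" by blast
  have qr: "QR_vertex_connected V E Q r" using min unfolding minimal_QR_vertex_connected_def by blast
  have "x \<noteq> y" using x(2) y(2) by blast
  have "2 \<le> min (r x) (r y)" using r x(1) y(1) by simp
  then obtain p q where pq: "p \<noteq> q" "is_path V E p x y" "is_path V E q x y"
      "interior p \<inter> interior q = {}"
    using k_vertex_connected_two_paths[OF QR_vertex_connectedD[OF qr x(1) y(1) \<open>x \<noteq> y\<close>]] by blast
  have "w \<in> interior p" if p: "is_path V E p x y" for p
  proof -
    obtain z where "z \<in> set p" "z \<in> boundary E D" using path_crosses_boundary[OF p x(2) y(2)] by blast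
    then have "w \<in> set p" using bdD by blast
    moreover have "w \<noteq> x" using x(2) DV by blast
    ultimately show ?thesis using mem_interior[OF p] y(3) by blast
  qed
  then show False using pq(2-4) by blast
qed

theorem lemma1:
  fixes V :: "'a set" and E :: "'a set set" and Q :: "'a set" and r :: "'a \<Rightarrow> nat"
  assumes "graph V E"
    and "Q \<subseteq> V"
    and "\<forall>q\<in>Q. r q \<in> {2, 3}"
    and "minimal_QR_vertex_connected V E Q r"
  shows "biconnected V E"
proof -
  have "\<forall>q\<in>Q. 1 \<le> r q" "\<forall>q\<in>Q. 2 \<le> r q" using assms(3) by auto
  then show ?thesis
    unfolding biconnected_def
    using minimal_QR_vertex_connected_connected[OF assms(1) _ assms(4)]
      minimal_QR_vertex_connected_del_vertex_connected[OF assms(1) _ assms(4)]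
    by blast
qed

end
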